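(* Let $G$ be a finite group with identity $e$ and $H$ a normal subgroup of $G$. Then the extended subgroup sum graph $\Gamma^+_{G,H}$ admits a perfect code if and only if either $H\in\{\{e\},G\}$ or $G^2\subseteq H$, where $G^2=\{g^2:g\in G\}$.
   Context: For a normal subgroup $H$ of a finite group $G$, the extended subgroup sum graph $\Gamma^+_{G,H}$ is the simple undirected graph with vertex set $G$ in which distinct vertices $x,y$ are adjacent if and only if $xy\in H$. A perfect code in a graph is a set $C$ of vertices that is independent and such that every vertex not in $C$ is adjacent to exactly one vertex of $C$. *)

theory Defs
  imports "HOL-Algebra.Coset"
begin

definition ess_adj :: "('a, 'b) monoid_scheme \<Rightarrow> 'a set \<Rightarrow> 'a \<Rightarrow> 'a \<Rightarrow> bool" where
  "ess_adj G H x y \<longleftrightarrow> x \<in> carrier G \<and> y \<in> carrier G \<and> x \<noteq> y \<and> x \<otimes>\<^bsub>G\<^esub> y \<in> H"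

definition perfect_code :: "'a set \<Rightarrow> ('a \<Rightarrow> 'a \<Rightarrow> bool) \<Rightarrow> 'a set \<Rightarrow> bool" where
  "perfect_code V E C \<longleftrightarrow> C \<subseteq> V \<and> (\<forall>x\<in>C. \<forall>y\<in>C. \<not> E x y)
     \<and> (\<forall>v\<in>V - C. \<exists>!c. c \<in> C \<and> E v c)"

definition has_perfect_code :: "'a set \<Rightarrow> ('a \<Rightarrow> 'a \<Rightarrow> bool) \<Rightarrow> bool" where
  "has_perfect_code V E \<longleftrightarrow> (\<exists>C. perfect_code V E C)"

end

theory Submission
  imports Defs
begin

text \<open>
  Since \<open>H\<close> is normal, \<open>x \<otimes> z \<in> H\<close> iff \<open>z \<in> H #> inv x\<close>, so adjacency only depends on the
  cosets of the two vertices: \<open>H #> g\<close> is joined completely to \<open>H #> inv g\<close> and to nothing else.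
  If all squares lie in \<open>H\<close>, then \<open>H #> g = H #> inv g\<close> and adjacency is transitive, so the graph
  is a disjoint union of cliques and one vertex from each clique is a perfect code; the same holds
  for \<open>H = {\<one>}\<close>, where every vertex has at most one neighbour.  If instead \<open>g \<otimes> g \<notin> H\<close>, the
  two cosets are distinct and span a complete bipartite component with sides of size \<open>card H\<close>,
  and for \<open>card H \<ge> 2\<close> no perfect code can meet such a component correctly.
\<close>

lemma has_perfect_code_cluster_graph:
  assumes sym: "\<And>x y. E x y \<Longrightarrow> E y x"
    and irrefl: "\<And>x y. E x y \<Longrightarrow> x \<noteq> y \<and> x \<in> V \<and> y \<in> V"
    and trans: "\<And>x y z. E x y \<Longrightarrow> E y z \<Longrightarrow> x \<noteq> z \<Longrightarrow> E x z"
  shows "has_perfect_code V E"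
proof -
  define R where "R x y \<longleftrightarrow> x = y \<or> E x y" for x y
  have R_sym: "R x y \<Longrightarrow> R y x" for x y
    using sym unfolding R_def by blast
  have R_trans: "R x y \<Longrightarrow> R y z \<Longrightarrow> R x z" for x y z
    using trans unfolding R_def by blast
  define rep where "rep x = (SOME y. R x y)" for x
  have R_rep: "R x (rep x)" for x
    unfolding rep_def by (rule someI [of _ x]) (simp add: R_def)
  have R_iff_rep_eq: "R x y \<longleftrightarrow> rep x = rep y" for x y
  proof
    assume "R x y"
    then have "R x = R y"
      using R_sym R_trans by (intro ext) meson
    then show "rep x = rep y"
      unfolding rep_def by simp
  next
    assume "rep x = rep y"
    then have "R x (rep y)"
      using R_rep [of x] by simp
    then show "R x y"
      by (rule R_trans [OF _ R_sym [OF R_rep [of y]]])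
  qed
  have rep_rep: "rep (rep x) = rep x" for x
    using R_iff_rep_eq [of x "rep x"] R_rep [of x] by simp
  have "perfect_code V E (rep ` V)"
    unfolding perfect_code_def
  proof (intro conjI ballI)
    show "rep ` V \<subseteq> V"
    proof (rule image_subsetI)
      fix x
      assume "x \<in> V"
      then show "rep x \<in> V"
        using R_rep [of x] irrefl [of x "rep x"] unfolding R_def by auto
    qed
  next
    fix x y
    assume "x \<in> rep ` V" "y \<in> rep ` V"
    then have "rep x = x" "rep y = y"
      using rep_rep by auto
    then show "\<not> E x y"
      using R_iff_rep_eq [of x y] irrefl [of x y] unfolding R_def by auto
  next
    fix v
    assume v: "v \<in> V - rep ` V"
    show "\<exists>!c. c \<in> rep ` V \<and> E v c"
    proof (rule ex1I)
      have "rep v \<noteq> v"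
        using v by (auto simp: image_iff)
      then show "rep v \<in> rep ` V \<and> E v (rep v)"
        using v R_rep [of v] unfolding R_def by blast
    next
      fix c
      assume c: "c \<in> rep ` V \<and> E v c"
      then have "rep c = rep v"
        using R_iff_rep_eq [of v c] unfolding R_def by simp
      then show "c = rep v"
        using c rep_rep by auto
    qed
  qed
  then show ?thesis
    unfolding has_perfect_code_def by blast
qed

lemma perfect_codeD:
  assumes "perfect_code V E C"
  shows perfect_code_independent: "x \<in> C \<Longrightarrow> y \<in> C \<Longrightarrow> \<not> E x y"
    and perfect_code_dominating: "v \<in> V - C \<Longrightarrow> \<exists>c\<in>C. E v c"
    and perfect_code_unique_neighbour:
      "v \<in> V - C \<Longrightarrow> c \<in> C \<Longrightarrow> c' \<in> C \<Longrightarrow> E v c \<Longrightarrow> E v c' \<Longrightarrow> c = c'"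
proof -
  show "x \<in> C \<Longrightarrow> y \<in> C \<Longrightarrow> \<not> E x y"
    using assms unfolding perfect_code_def by blast
  show "v \<in> V - C \<Longrightarrow> \<exists>c\<in>C. E v c"
    using assms unfolding perfect_code_def by blast
  show "c = c'" if "v \<in> V - C" "c \<in> C" "c' \<in> C" "E v c" "E v c'"
  proof -
    have "\<exists>!c. c \<in> C \<and> E v c"
      using assms that(1) unfolding perfect_code_def by blast
    then show ?thesis
      using that(2-5) by (metis (no_types, lifting))
  qed
qed

lemma perfect_code_avoids_bipartite_side:
  assumes pc: "perfect_code V E C"
    and sym: "\<And>x y. E x y \<Longrightarrow> E y x"
    and cross: "\<And>a b. a \<in> A \<Longrightarrow> b \<in> B \<Longrightarrow> E a b"
    and nbrs_A: "\<And>a z. a \<in> A \<Longrightarrow> E a z \<Longrightarrow> z \<in> B"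
    and "A \<subseteq> V" "B \<subseteq> V"
    and "a \<in> A" "a' \<in> A" "a \<noteq> a'" "b \<in> B"
  shows "C \<inter> A = {}"
proof (rule ccontr)
  assume "C \<inter> A \<noteq> {}"
  then obtain c where c: "c \<in> C" "c \<in> A"
    by blast
  have C_B: "C \<inter> B = {}"
    using perfect_code_independent [OF pc] cross c by blast
  obtain d where d: "d \<in> A" "d \<noteq> c"
    using assms(7-9) by blast
  show False
  proof (cases "d \<in> C")
    case True
    have "b \<in> V - C"
      using \<open>B \<subseteq> V\<close> \<open>b \<in> B\<close> C_B by blast
    moreover have "E b c" "E b d"
      using sym [OF cross] c d \<open>b \<in> B\<close> by auto
    ultimately show False
      using perfect_code_unique_neighbour [OF pc] d True c by blast
  next
    case False
    then obtain e where "e \<in> C" "E d e"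
      using perfect_code_dominating [OF pc, of d] \<open>A \<subseteq> V\<close> d by blast
    then show False
      using nbrs_A d C_B by blast
  qed
qed

lemma no_perfect_code_complete_bipartite_component:
  assumes sym: "\<And>x y. E x y \<Longrightarrow> E y x"
    and cross: "\<And>a b. a \<in> A \<Longrightarrow> b \<in> B \<Longrightarrow> E a b"
    and nbrs_A: "\<And>a z. a \<in> A \<Longrightarrow> E a z \<Longrightarrow> z \<in> B"
    and nbrs_B: "\<And>b z. b \<in> B \<Longrightarrow> E b z \<Longrightarrow> z \<in> A"
    and "A \<subseteq> V" "B \<subseteq> V"
    and "a \<in> A" "a' \<in> A" "a \<noteq> a'"
    and "b \<in> B" "b' \<in> B" "b \<noteq> b'"
  shows "\<not> perfect_code V E C"
proof
  assume pc: "perfect_code V E C"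
  have cross_BA: "E b a" if "b \<in> B" "a \<in> A" for b a
    by (rule sym [OF cross [OF that(2,1)]])
  have C_A: "C \<inter> A = {}"
    by (rule perfect_code_avoids_bipartite_side [OF pc sym cross nbrs_A assms(5-10)])
  have C_B: "C \<inter> B = {}"
    by (rule perfect_code_avoids_bipartite_side [OF pc sym cross_BA nbrs_B assms(6,5,10-12,7)])
  obtain c where "c \<in> C" "E a c"
    using perfect_code_dominating [OF pc, of a] assms(5,7) C_A by blast
  then show False
    using nbrs_A \<open>a \<in> A\<close> C_B by blast
qed

lemma (in group) inv_cancel_left [simp]:
  "x \<in> carrier G \<Longrightarrow> y \<in> carrier G \<Longrightarrow> x \<otimes> (inv x \<otimes> y) = y"
  "x \<in> carrier G \<Longrightarrow> y \<in> carrier G \<Longrightarrow> inv x \<otimes> (x \<otimes> y) = y"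
  by (simp_all add: m_assoc [symmetric])

lemma (in group) subgroup_mult_mem_cancel_left:
  assumes "subgroup H G" "h \<in> H" "y \<in> carrier G"
  shows "h \<otimes> y \<in> H \<longleftrightarrow> y \<in> H"
  using assms by (metis subgroup.m_closed subgroup.m_inv_closed subgroup.mem_carrier inv_solve_left')

lemma (in normal) mult_mem_commute:
  assumes "x \<in> carrier G" "y \<in> carrier G" "x \<otimes> y \<in> H"
  shows "y \<otimes> x \<in> H"
proof -
  have "inv x \<otimes> (x \<otimes> y) \<otimes> x \<in> H"
    using inv_op_closed1 assms by blast
  then show ?thesis
    using assms by (simp add: m_assoc [symmetric])
qed

lemma (in normal) mult_mem_iff_rcos_inv:
  assumes g: "g \<in> carrier G" and x: "x \<in> H #> g" and z: "z \<in> carrier G"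
  shows "x \<otimes> z \<in> H \<longleftrightarrow> z \<in> H #> inv g"
proof -
  have xc: "x \<in> carrier G"
    using elemrcos_carrier [OF is_group g x] .
  have xg: "x \<otimes> inv g \<in> H"
    using rcos_module_imp [OF is_group g x] .
  have "x \<otimes> z = (x \<otimes> inv g) \<otimes> (g \<otimes> z)"
    using g xc z by (simp add: m_assoc)
  then have "x \<otimes> z \<in> H \<longleftrightarrow> g \<otimes> z \<in> H"
    using subgroup_mult_mem_cancel_left [OF subgroup_axioms xg] g z by simp
  also have "\<dots> \<longleftrightarrow> z \<otimes> inv (inv g) \<in> H"
    using mult_mem_commute g z by auto
  also have "\<dots> \<longleftrightarrow> z \<in> H #> inv g"
    using rcos_module [OF is_group inv_closed [OF g] z] by simp
  finally show ?thesis .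
qed

lemma (in normal) ess_adj_sym: "ess_adj G H x y \<Longrightarrow> ess_adj G H y x"
  unfolding ess_adj_def using mult_mem_commute by blast

lemma (in normal) ess_adj_trans:
  assumes "H = {\<one>} \<or> (\<forall>g\<in>carrier G. g \<otimes> g \<in> H)"
    and xy: "ess_adj G H x y" and yz: "ess_adj G H y z" and "x \<noteq> z"
  shows "ess_adj G H x z"
  using assms(1)
proof
  assume H: "H = {\<one>}"
  have c: "x \<in> carrier G" "y \<in> carrier G" "z \<in> carrier G"
    using xy yz unfolding ess_adj_def by auto
  have "x \<otimes> y = \<one>" "y \<otimes> z = \<one>"
    using xy yz H unfolding ess_adj_def by auto
  then have "inv y = x" "inv y = z"
    using c by (auto intro: inv_equality inv_comm)
  then have "x = z"
    by simp
  with \<open>x \<noteq> z\<close> show ?thesis ..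
next
  assume squares: "\<forall>g\<in>carrier G. g \<otimes> g \<in> H"
  have c: "x \<in> carrier G" "y \<in> carrier G" "z \<in> carrier G"
    and "x \<otimes> y \<in> H" "y \<otimes> z \<in> H"
    using xy yz unfolding ess_adj_def by auto
  then have "(x \<otimes> y) \<otimes> inv (y \<otimes> y) \<otimes> (y \<otimes> z) \<in> H"
    using squares by simp
  moreover have "(x \<otimes> y) \<otimes> inv (y \<otimes> y) \<otimes> (y \<otimes> z) = x \<otimes> z"
    using c by (simp add: inv_mult_group m_assoc)
  ultimately show ?thesis
    using c \<open>x \<noteq> z\<close> unfolding ess_adj_def by simp
qed

lemma (in normal) has_perfect_code_ess_adj:
  assumes "H = {\<one>} \<or> (\<forall>g\<in>carrier G. g \<otimes> g \<in> H)"
  shows "has_perfect_code (carrier G) (ess_adj G H)"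
proof (rule has_perfect_code_cluster_graph)
  show "ess_adj G H x y \<Longrightarrow> ess_adj G H y x" for x y
    by (rule ess_adj_sym)
  show "ess_adj G H x y \<Longrightarrow> x \<noteq> y \<and> x \<in> carrier G \<and> y \<in> carrier G" for x y
    by (simp add: ess_adj_def)
  show "ess_adj G H x y \<Longrightarrow> ess_adj G H y z \<Longrightarrow> x \<noteq> z \<Longrightarrow> ess_adj G H x z" for x y z
    by (rule ess_adj_trans [OF assms])
qed

lemma (in normal) no_perfect_code_ess_adj:
  assumes g: "g \<in> carrier G" "g \<otimes> g \<notin> H" and h: "h \<in> H" "h \<noteq> \<one>"
  shows "\<not> perfect_code (carrier G) (ess_adj G H) C"
proof -
  let ?A = "H #> g" and ?B = "H #> inv g"
  have A_nbrs: "x \<otimes> z \<in> H \<longleftrightarrow> z \<in> ?B" if "x \<in> ?A" "z \<in> carrier G" for x z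
    using mult_mem_iff_rcos_inv [OF g(1) that] .
  have B_nbrs: "x \<otimes> z \<in> H \<longleftrightarrow> z \<in> ?A" if "x \<in> ?B" "z \<in> carrier G" for x z
    using mult_mem_iff_rcos_inv [OF inv_closed [OF g(1)] that] g(1) by simp
  have A_carrier: "?A \<subseteq> carrier G" and B_carrier: "?B \<subseteq> carrier G"
    using r_coset_subset_G [OF subset] g(1) by auto
  have g_A: "g \<in> ?A" and inv_g_B: "inv g \<in> ?B"
    using rcos_self [OF _ subgroup_axioms] g(1) by auto
  have disjoint: "?A \<inter> ?B = {}"
  proof (rule ccontr)
    assume "?A \<inter> ?B \<noteq> {}"
    then obtain x where "x \<in> ?A" "x \<in> ?B"
      by blast
    then have "g \<in> ?B"
      using A_nbrs B_nbrs g_A g(1) by blast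
    then show False
      using rcos_module_imp [OF is_group inv_closed [OF g(1)]] g by simp
  qed
  have cross: "ess_adj G H a b" if "a \<in> ?A" "b \<in> ?B" for a b
    using that disjoint A_nbrs [OF that(1)] A_carrier B_carrier unfolding ess_adj_def by blast
  have A_closed: "z \<in> ?B" if "a \<in> ?A" "ess_adj G H a z" for a z
    using that A_nbrs unfolding ess_adj_def by blast
  have B_closed: "z \<in> ?A" if "b \<in> ?B" "ess_adj G H b z" for b z
    using that B_nbrs unfolding ess_adj_def by blast
  have elems: "h \<otimes> g \<in> ?A" "h \<otimes> inv g \<in> ?B" "g \<noteq> h \<otimes> g" "inv g \<noteq> h \<otimes> inv g"
    using h g(1) by (auto intro: rcosI)
  show ?thesis
  proof (rule no_perfect_code_complete_bipartite_component
      [where E = "ess_adj G H" and A = ?A and B = ?B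
        and a = g and a' = "h \<otimes> g" and b = "inv g" and b' = "h \<otimes> inv g"])
    show "ess_adj G H x y \<Longrightarrow> ess_adj G H y x" for x y
      by (rule ess_adj_sym)
  qed (use cross A_closed B_closed A_carrier B_carrier g_A inv_g_B elems in blast)+
qed

theorem theorem6p1:
  fixes G :: "('a, 'b) monoid_scheme" and H :: "'a set"
  assumes "group G" and "finite (carrier G)" and "H \<lhd> G"
  shows "has_perfect_code (carrier G) (ess_adj G H)
         \<longleftrightarrow> (H = {\<one>\<^bsub>G\<^esub>} \<or> H = carrier G
              \<or> {g \<otimes>\<^bsub>G\<^esub> g | g. g \<in> carrier G} \<subseteq> H)"
proof -
  interpret normal H G
    by (fact assms(3))
  have "H = {\<one>\<^bsub>G\<^esub>} \<or> H = carrier G \<or> {g \<otimes>\<^bsub>G\<^esub> g | g. g \<in> carrier G} \<subseteq> H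
    \<longleftrightarrow> H = {\<one>\<^bsub>G\<^esub>} \<or> (\<forall>g\<in>carrier G. g \<otimes>\<^bsub>G\<^esub> g \<in> H)"
    using m_closed by blast
  moreover have "has_perfect_code (carrier G) (ess_adj G H)
    \<longleftrightarrow> H = {\<one>\<^bsub>G\<^esub>} \<or> (\<forall>g\<in>carrier G. g \<otimes>\<^bsub>G\<^esub> g \<in> H)"
  proof
    assume "has_perfect_code (carrier G) (ess_adj G H)"
    then obtain C where "perfect_code (carrier G) (ess_adj G H) C"
      unfolding has_perfect_code_def by blast
    then show "H = {\<one>\<^bsub>G\<^esub>} \<or> (\<forall>g\<in>carrier G. g \<otimes>\<^bsub>G\<^esub> g \<in> H)"
      using no_perfect_code_ess_adj subgroup.one_closed [OF subgroup_axioms] by blast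
  qed (rule has_perfect_code_ess_adj)
  ultimately show ?thesis
    by simp
qed

end
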